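(* For every $n\in\mathbb N$, $C(S^1)_{(n)}\simeq\left(C(S^1)^{(n)}\right)^d$, i.e. there is a unital complete order isomorphism between these operator systems.
   Context: $C(S^1)_{(n)}$: operator system of continuous functions $f$ on the unit circle with Fourier coefficients $\hat f(k)=0$ for $|k|\ge n$; $F\in M_p(C(S^1)_{(n)})$ positive iff $F(z)$ positive semidefinite for every $z\in S^1$; order unit the constant $1$. $C(S^1)^{(n)}$: operator subsystem of $M_n(\mathbb C)$ of Toeplitz matrices $[\tau_{k-\ell}]_{k,\ell=0}^{n-1}$. For a finite-dimensional operator system $\mathcal R$, $\mathcal R^d$ is its dual with matrix ordering: $[\varphi_{ij}]$ positive iff $r\mapsto[\varphi_{ij}(r)]$ is completely positive $\mathcal R\to M_p(\mathbb C)$; $\left(C(S^1)^{(n)}\right)^d$ is given as order unit the faithful state $[\tau_{k-\ell}]\mapsto\tau_0$. A unital complete order isomorphism is a unit-preserving linear bijection which, with its inverse, is completely positive. *)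

theory Defs
  imports "HOL-Analysis.Analysis"
begin

text \<open>A p x p matrix over a space V is modelled as nat => nat => V, only entries with
indices below p being relevant.  A complex number is nonnegative if it is real and >= 0.\<close>

definition cnonneg :: "complex \<Rightarrow> bool" where
  "cnonneg s \<longleftrightarrow> Im s = 0 \<and> 0 \<le> Re s"

definition psd :: "nat \<Rightarrow> (nat \<Rightarrow> nat \<Rightarrow> complex) \<Rightarrow> bool" where
  "psd p M \<longleftrightarrow> (\<forall>v::nat \<Rightarrow> complex.
      cnonneg (\<Sum>i<p. \<Sum>j<p. cnj (v i) * M i j * v j))"

text \<open>Positive semidefiniteness of a p x p block matrix with q x q blocks,
  i.e. of the corresponding (pq) x (pq) matrix (entry ((i,k),(j,l)) is B i j k l).\<close>
definition block_psd :: "nat \<Rightarrow> nat \<Rightarrow> (nat \<Rightarrow> nat \<Rightarrow> nat \<Rightarrow> nat \<Rightarrow> complex) \<Rightarrow> bool" where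
  "block_psd p q B \<longleftrightarrow> (\<forall>v::nat \<Rightarrow> nat \<Rightarrow> complex.
      cnonneg (\<Sum>i<p. \<Sum>j<p. \<Sum>k<q. \<Sum>l<q. cnj (v i k) * B i j k l * v j l))"

text \<open>Elements of C(S^1) are functions on the complex plane, continuous on the unit circle
  and (for extensionality) zero off the circle.\<close>

definition fourier_coeff :: "(complex \<Rightarrow> complex) \<Rightarrow> int \<Rightarrow> complex" where
  "fourier_coeff f k = integral {0..2*pi} (\<lambda>t. f (cis t) * cis (- (of_int k * t))) / (2 * pi)"

definition CS1_low :: "nat \<Rightarrow> (complex \<Rightarrow> complex) set" where
  "CS1_low n = {f. continuous_on (sphere 0 1) f \<and> (\<forall>z. z \<notin> sphere 0 1 \<longrightarrow> f z = 0)
                 \<and> (\<forall>k::int. \<bar>k\<bar> \<ge> int n \<longrightarrow> fourier_coeff f k = 0)}"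

definition CS1_low_pos :: "nat \<Rightarrow> (nat \<Rightarrow> nat \<Rightarrow> (complex \<Rightarrow> complex)) \<Rightarrow> bool" where
  "CS1_low_pos p F \<longleftrightarrow> (\<forall>z\<in>sphere 0 1. psd p (\<lambda>i j. F i j z))"

definition CS1_unit :: "complex \<Rightarrow> complex" where
  "CS1_unit z = (if z \<in> sphere 0 1 then 1 else 0)"

definition toeplitz :: "nat \<Rightarrow> (nat \<Rightarrow> nat \<Rightarrow> complex) set" where
  "toeplitz n = {T. \<exists>\<tau>::int \<Rightarrow> complex.
      \<forall>k l. T k l = (if k < n \<and> l < n then \<tau> (int k - int l) else 0)}"

definition toeplitz_pos :: "nat \<Rightarrow> nat \<Rightarrow> (nat \<Rightarrow> nat \<Rightarrow> (nat \<Rightarrow> nat \<Rightarrow> complex)) \<Rightarrow> bool" where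
  "toeplitz_pos n p R \<longleftrightarrow> block_psd p n (\<lambda>i j k l. R i j k l)"

definition toeplitz_dual :: "nat \<Rightarrow> ((nat \<Rightarrow> nat \<Rightarrow> complex) \<Rightarrow> complex) set" where
  "toeplitz_dual n = {\<phi>.
      (\<forall>x\<in>toeplitz n. \<forall>y\<in>toeplitz n. \<phi> (\<lambda>k l. x k l + y k l) = \<phi> x + \<phi> y)
    \<and> (\<forall>c. \<forall>x\<in>toeplitz n. \<phi> (\<lambda>k l. c * x k l) = c * \<phi> x)
    \<and> (\<forall>x. x \<notin> toeplitz n \<longrightarrow> \<phi> x = 0)}"

text \<open>[phi_ij] is positive iff r |-> [phi_ij(r)] is completely positive from the Toeplitz
  operator system to M_p.\<close>
definition toeplitz_dual_pos ::
  "nat \<Rightarrow> nat \<Rightarrow> (nat \<Rightarrow> nat \<Rightarrow> ((nat \<Rightarrow> nat \<Rightarrow> complex) \<Rightarrow> complex)) \<Rightarrow> bool" where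
  "toeplitz_dual_pos n p \<Phi> \<longleftrightarrow> (\<forall>q R. (\<forall>a<q. \<forall>b<q. R a b \<in> toeplitz n) \<longrightarrow>
      toeplitz_pos n q R \<longrightarrow> block_psd q p (\<lambda>a b i j. \<Phi> i j (R a b)))"

text \<open>Order unit of the dual: the faithful state [tau_(k-l)] |-> tau_0.\<close>
definition toeplitz_dual_unit :: "nat \<Rightarrow> (nat \<Rightarrow> nat \<Rightarrow> complex) \<Rightarrow> complex" where
  "toeplitz_dual_unit n T = (if T \<in> toeplitz n then T 0 0 else 0)"

end

theory Submission
  imports Defs
begin

(* The isomorphism sends f to the functional [tau_(k-l)] |-> sum_m f^(m) tau_(-m).  It is a linear
   bijection because a continuous function is determined by its Fourier coefficients (Stone-Weierstrass),
   so f is the trigonometric polynomial built from them; it matches the order units by inspection.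

   Positivity of [phi_ij] forces positivity of F: testing it on the rank-one positive Toeplitz matrix
   [cis ((l - k) t)] evaluates F at cis t.

   Conversely, compressing F by any vectors gives a positive matrix-valued trigonometric polynomial G of
   degree < n, and one must pair its coefficients nonnegatively with a positive block Toeplitz matrix
   [rho_(k-l)] of size n.  For every N the block Toeplitz matrix [g_(l-k)] of size N is positive (its
   quadratic form averages those of G at roots of unity of high order) and has band width n.  A Cholesky
   factorisation respecting the band splits it into positive pieces supported on n consecutive blocks,
   each of which pairs nonnegatively with the section of rho.  The total pairing is A + N S, where S is
   the quantity in question, so S >= 0. *)

section \<open>Positive matrices\<close>

definition qform :: "nat \<Rightarrow> (nat \<Rightarrow> nat \<Rightarrow> complex) \<Rightarrow> (nat \<Rightarrow> complex) \<Rightarrow> complex" where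
  "qform P M v = (\<Sum>i<P. \<Sum>j<P. cnj (v i) * M i j * v j)"

lemma psd_iff_qform: "psd P M \<longleftrightarrow> (\<forall>v. cnonneg (qform P M v))"
  by (simp add: psd_def qform_def)

lemma cnonneg_sum: "(\<And>i. i \<in> A \<Longrightarrow> cnonneg (f i)) \<Longrightarrow> cnonneg (sum f A)"
  by (induction A rule: infinite_finite_induct) (simp_all add: cnonneg_def)

lemma cnonneg_divide_of_nat: "cnonneg a \<Longrightarrow> cnonneg (a / of_nat m)"
  by (simp add: cnonneg_def)

lemma cnonneg_cnj_mult_self: "cnonneg (cnj z * z)"
  by (simp add: cnonneg_def)

lemma psd_cong: "psd P M \<Longrightarrow> (\<And>i j. i < P \<Longrightarrow> j < P \<Longrightarrow> M i j = M' i j) \<Longrightarrow> psd P M'"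
  by (simp add: psd_def)

lemma sum_swap_pairs:
  "(\<Sum>a\<in>A. \<Sum>b\<in>B. \<Sum>i\<in>I. \<Sum>j\<in>J. f a b i j) = (\<Sum>i\<in>I. \<Sum>j\<in>J. \<Sum>a\<in>A. \<Sum>b\<in>B. f a b i j)"
proof -
  have "(\<Sum>a\<in>A. \<Sum>b\<in>B. \<Sum>i\<in>I. \<Sum>j\<in>J. f a b i j) = (\<Sum>a\<in>A. \<Sum>i\<in>I. \<Sum>j\<in>J. \<Sum>b\<in>B. f a b i j)"
    by (rule sum.cong[OF refl], subst sum.swap, rule sum.cong[OF refl], rule sum.swap)
  also have "\<dots> = (\<Sum>i\<in>I. \<Sum>j\<in>J. \<Sum>a\<in>A. \<Sum>b\<in>B. f a b i j)"
    by (subst sum.swap, rule sum.cong[OF refl], rule sum.swap)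
  finally show ?thesis .
qed

lemma psd_compress:
  assumes "psd p M"
  shows "psd q (\<lambda>a b. \<Sum>i<p. \<Sum>j<p. cnj (V a i) * M i j * V b j)"
  unfolding psd_iff_qform
proof
  fix w :: "nat \<Rightarrow> complex"
  have "qform q (\<lambda>a b. \<Sum>i<p. \<Sum>j<p. cnj (V a i) * M i j * V b j) w
      = (\<Sum>a<q. \<Sum>b<q. \<Sum>i<p. \<Sum>j<p. cnj (w a * V a i) * M i j * (w b * V b j))"
    unfolding qform_def by (simp add: sum_distrib_left sum_distrib_right mult_ac)
  also have "\<dots> = qform p M (\<lambda>i. \<Sum>a<q. w a * V a i)"
    unfolding qform_def
    by (subst sum_swap_pairs) (simp add: sum_distrib_left sum_distrib_right mult_ac)
  finally show "cnonneg (qform q (\<lambda>a b. \<Sum>i<p. \<Sum>j<p. cnj (V a i) * M i j * V b j) w)"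
    using assms by (simp add: psd_iff_qform)
qed

lemma qform_single:
  assumes "i < P"
  shows "qform P M (\<lambda>k. if k = i then a else 0) = cnj a * M i i * a"
proof -
  have "qform P M (\<lambda>k. if k = i then a else 0)
      = (\<Sum>k<P. if k = i then cnj a * (\<Sum>l<P. if l = i then M k l * a else 0) else 0)"
    unfolding qform_def
    by (intro sum.cong refl) (auto simp: sum_distrib_left if_distrib cong: if_cong)
  also have "\<dots> = cnj a * M i i * a" using assms by (simp add: sum.delta)
  finally show ?thesis .
qed

lemma qform_pair:
  assumes "i < P" "j < P" "i \<noteq> j"
  shows "qform P M (\<lambda>k. if k = i then a else if k = j then b else 0) =
     cnj a * M i i * a + cnj a * M i j * b + cnj b * M j i * a + cnj b * M j j * b"
proof -
  let ?v = "\<lambda>k. if k = i then a else if k = j then b else 0"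
  have pair_sum: "(\<Sum>k<P. f k) = f i + f j" if "\<And>k. k \<noteq> i \<Longrightarrow> k \<noteq> j \<Longrightarrow> f k = 0"
    for f :: "nat \<Rightarrow> complex"
  proof -
    have "(\<Sum>k<P. f k) = (\<Sum>k\<in>{i,j}. f k)"
      by (rule sum.mono_neutral_right) (use assms that in auto)
    then show ?thesis using assms by simp
  qed
  have "qform P M ?v = (\<Sum>k<P. cnj (?v k) * (\<Sum>l<P. M k l * ?v l))"
    unfolding qform_def by (simp add: sum_distrib_left mult.assoc)
  also have "\<dots> = cnj a * (\<Sum>l<P. M i l * ?v l) + cnj b * (\<Sum>l<P. M j l * ?v l)"
    using assms by (subst pair_sum) auto
  also have "(\<Sum>l<P. M i l * ?v l) = M i i * a + M i j * b"
    using assms by (subst pair_sum) auto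
  also have "(\<Sum>l<P. M j l * ?v l) = M j i * a + M j j * b"
    using assms by (subst pair_sum) auto
  finally show ?thesis by (simp add: algebra_simps)
qed

lemma psd_diag_nonneg: "psd P M \<Longrightarrow> i < P \<Longrightarrow> cnonneg (M i i)"
  using qform_single[of i P M 1] by (simp add: psd_iff_qform) metis

lemma psd_hermitian:
  assumes "psd P M" "i < P" "j < P"
  shows "M j i = cnj (M i j)"
proof (cases "i = j")
  case True
  then show ?thesis using psd_diag_nonneg[OF assms(1,2)] by (simp add: cnonneg_def complex_eq_iff)
next
  case False
  have diag: "Im (M i i) = 0" "Im (M j j) = 0"
    using psd_diag_nonneg[OF assms(1)] assms(2,3) by (auto simp: cnonneg_def)
  have form: "cnonneg (qform P M (\<lambda>k. if k = i then 1 else if k = j then c else 0))" for c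
    using assms(1) by (simp add: psd_iff_qform)
  show ?thesis
    using form[of 1] form[of \<i>] diag
    unfolding qform_pair[OF assms(2,3) False] by (simp add: cnonneg_def complex_eq_iff)
qed

lemma psd_zero_diag_row:
  assumes "psd P M" "s < P" "j < P" "M s s = 0"
  shows "M s j = 0"
proof (rule ccontr)
  let ?x = "M s j"
  assume nz: "?x \<noteq> 0"
  then have "s \<noteq> j" using assms by auto
  \<comment> \<open>the form at \<open>-r x e\<^sub>s + e\<^sub>j\<close> equals \<open>M j j - 2 r |x|\<^sup>2\<close>, negative for large \<open>r\<close>\<close>
  define r where "r = (Re (M j j) + 1) / (2 * (cmod ?x)\<^sup>2)"
  have "cnonneg (qform P M (\<lambda>k. if k = s then - (of_real r * ?x) else if k = j then 1 else 0))"
    using assms by (simp add: psd_iff_qform)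
  then have "cnonneg (M j j - 2 * of_real r * (cnj ?x * ?x))"
    unfolding qform_pair[OF assms(2,3) \<open>s \<noteq> j\<close>] psd_hermitian[OF assms(1-3)] assms(4)
    by (simp add: algebra_simps)
  moreover have "cnj ?x * ?x = of_real ((cmod ?x)\<^sup>2)"
    using complex_norm_square[of ?x] by (simp add: mult.commute)
  ultimately have "0 \<le> Re (M j j) - 2 * r * (cmod ?x)\<^sup>2"
    by (simp add: cnonneg_def)
  moreover have "2 * r * (cmod ?x)\<^sup>2 = Re (M j j) + 1"
    unfolding r_def using nz by simp
  ultimately show False by simp
qed

lemma qform_update:
  assumes "s < P"
  shows "qform P M (v(s := v s + t)) = qform P M v + cnj t * (\<Sum>j<P. M s j * v j)
     + t * (\<Sum>i<P. cnj (v i) * M i s) + cnj t * t * M s s"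
proof -
  let ?e = "\<lambda>k. if k = s then t else 0"
  have upd: "v(s := v s + t) = (\<lambda>k. v k + ?e k)" by auto
  have "qform P M (\<lambda>k. v k + ?e k) = qform P M v + (\<Sum>i<P. \<Sum>j<P. cnj (?e i) * M i j * v j)
      + (\<Sum>i<P. \<Sum>j<P. cnj (v i) * M i j * ?e j) + qform P M ?e"
    unfolding qform_def by (simp add: algebra_simps sum.distrib)
  also have "(\<Sum>i<P. \<Sum>j<P. cnj (?e i) * M i j * v j)
      = (\<Sum>i<P. if i = s then cnj t * (\<Sum>j<P. M s j * v j) else 0)"
    by (intro sum.cong refl) (simp add: sum_distrib_left mult_ac)
  also have "\<dots> = cnj t * (\<Sum>j<P. M s j * v j)"
    using assms by simp
  also have "(\<Sum>i<P. \<Sum>j<P. cnj (v i) * M i j * ?e j) = t * (\<Sum>i<P. cnj (v i) * M i s)"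
    using assms by (simp add: if_distrib sum.delta sum_distrib_left mult_ac cong: if_cong)
  finally show ?thesis
    unfolding upd qform_single[OF assms] by (simp add: mult_ac)
qed

lemma psd_schur_complement:
  assumes psd: "psd P M" and "s < P" and pivot: "0 < Re (M s s)"
  shows "psd P (\<lambda>i j. M i j - M i s * M s j / M s s)"
  unfolding psd_iff_qform
proof
  fix v :: "nat \<Rightarrow> complex"
  define d where "d = Re (M s s)"
  have d: "M s s = of_real d"
    using psd_diag_nonneg[OF psd \<open>s < P\<close>] by (simp add: d_def cnonneg_def complex_eq_iff)
  define \<beta> where "\<beta> = (\<Sum>j<P. M s j * v j)"
  have col: "(\<Sum>i<P. cnj (v i) * M i s) = cnj \<beta>"
    unfolding \<beta>_def using psd_hermitian[OF psd \<open>s < P\<close>] by (simp add: mult.commute)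
  have "(\<Sum>i<P. cnj (v i) * M i s) * (\<Sum>j<P. M s j * v j) / M s s
      = (\<Sum>i<P. \<Sum>j<P. cnj (v i) * (M i s * M s j / M s s) * v j)"
    by (simp add: sum_product sum_divide_distrib mult_ac) (rule sum.swap)
  then have "qform P (\<lambda>i j. M i j - M i s * M s j / M s s) v
      = qform P M v - (\<Sum>i<P. cnj (v i) * M i s) * (\<Sum>j<P. M s j * v j) / M s s"
    by (simp add: qform_def algebra_simps sum_subtractf)
  also have "\<dots> = qform P M (v(s := v s + - \<beta> / M s s))"
    unfolding qform_update[OF \<open>s < P\<close>] col \<beta>_def[symmetric] d
    using pivot d_def by (simp add: field_simps)
  finally show "cnonneg (qform P (\<lambda>i j. M i j - M i s * M s j / M s s) v)"
    using psd by (simp add: psd_iff_qform)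
qed

lemma psd_pivot_step:
  assumes psd: "psd P M" and "s < P"
  obtains y where "psd P (\<lambda>i j. M i j - y i * cnj (y j))"
    and "\<And>j. j < P \<Longrightarrow> M s j = y s * cnj (y j)"
    and "\<And>i. y i \<noteq> 0 \<Longrightarrow> i < P \<and> M s i \<noteq> 0"
proof (cases "M s s = 0")
  case True
  then show ?thesis
    using that[of "\<lambda>_. 0"] psd psd_zero_diag_row[OF psd \<open>s < P\<close>] by simp
next
  case False
  define d where "d = Re (M s s)"
  have d: "M s s = of_real d"
    using psd_diag_nonneg[OF psd \<open>s < P\<close>] by (simp add: d_def cnonneg_def complex_eq_iff)
  then have "d > 0"
    using False psd_diag_nonneg[OF psd \<open>s < P\<close>] by (auto simp: cnonneg_def)
  define y where "y i = (if i < P then cnj (M s i) / of_real (sqrt d) else 0)" for i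
  have yy: "y i * cnj (y j) = M i s * M s j / M s s" if "i < P" "j < P" for i j
    using that \<open>d > 0\<close> psd_hermitian[OF psd \<open>s < P\<close>, of i] d
    by (simp add: y_def field_simps flip: of_real_mult)
  show ?thesis
  proof (rule that)
    have "0 < Re (M s s)" using \<open>d > 0\<close> d by simp
    from psd_schur_complement[OF psd \<open>s < P\<close> this]
    show "psd P (\<lambda>i j. M i j - y i * cnj (y j))"
      by (rule psd_cong) (simp add: yy)
    show "M s j = y s * cnj (y j)" if "j < P" for j
      using yy[OF \<open>s < P\<close> that] False by simp
    show "i < P \<and> M s i \<noteq> 0" if "y i \<noteq> 0" for i
      using that by (auto simp: y_def split: if_splits)
  qed
qed

lemma psd_pivot_step_in_pattern:
  fixes B :: "nat \<Rightarrow> nat \<Rightarrow> bool"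
  assumes elim: "\<And>c i j. c \<le> i \<Longrightarrow> c \<le> j \<Longrightarrow> B c i \<Longrightarrow> B c j \<Longrightarrow> B i j"
    and psd: "psd P M" and pattern: "\<forall>i<P. \<forall>j<P. M i j \<noteq> 0 \<longrightarrow> B i j"
    and upper: "\<forall>i<s. \<forall>j<P. M i j = 0" and "s < P"
  obtains y where "psd P (\<lambda>i j. M i j - y i * cnj (y j))"
    and "\<forall>i<P. \<forall>j<P. M i j - y i * cnj (y j) \<noteq> 0 \<longrightarrow> B i j"
    and "\<forall>i<Suc s. \<forall>j<P. M i j - y i * cnj (y j) = 0"
    and "\<And>i. y i \<noteq> 0 \<Longrightarrow> s \<le> i \<and> i < P \<and> B s i"
proof -
  have row_s_upper: "s \<le> i" if "i < P" "M s i \<noteq> 0" for i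
  proof (rule ccontr)
    assume "\<not> s \<le> i"
    then have "M i s = 0" using upper \<open>s < P\<close> by simp
    then show False using that psd_hermitian[OF psd \<open>s < P\<close> \<open>i < P\<close>] by simp
  qed
  obtain y where psd': "psd P (\<lambda>i j. M i j - y i * cnj (y j))"
    and row: "\<And>j. j < P \<Longrightarrow> M s j = y s * cnj (y j)"
    and y: "\<And>i. y i \<noteq> 0 \<Longrightarrow> i < P \<and> M s i \<noteq> 0"
    using psd_pivot_step[OF psd \<open>s < P\<close>] by blast
  show ?thesis
  proof (rule that[OF psd'])
    show "\<forall>i<P. \<forall>j<P. M i j - y i * cnj (y j) \<noteq> 0 \<longrightarrow> B i j"
    proof (intro allI impI)
      fix i j assume ij: "i < P" "j < P" "M i j - y i * cnj (y j) \<noteq> 0"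
      show "B i j"
      proof (cases "M i j = 0")
        case True
        then have "M s i \<noteq> 0" "M s j \<noteq> 0" using ij y by force+
        then show ?thesis using elim pattern row_s_upper \<open>s < P\<close> ij by blast
      qed (use pattern ij in auto)
    qed
    show "\<forall>i<Suc s. \<forall>j<P. M i j - y i * cnj (y j) = 0"
    proof (intro allI impI)
      fix i j assume "i < Suc s" "j < P"
      show "M i j - y i * cnj (y j) = 0"
      proof (cases "i = s")
        case False
        then have "i < s" using \<open>i < Suc s\<close> by simp
        then have "y i = 0" using y row_s_upper by force
        then show ?thesis using upper \<open>i < s\<close> \<open>j < P\<close> by simp
      qed (use row \<open>j < P\<close> in simp)
    qed
    show "s \<le> i \<and> i < P \<and> B s i" if "y i \<noteq> 0" for i
      using that y row_s_upper pattern \<open>s < P\<close> by blast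
  qed
qed

lemma psd_cholesky_in_pattern_from:
  fixes B :: "nat \<Rightarrow> nat \<Rightarrow> bool"
  assumes elim: "\<And>c i j. c \<le> i \<Longrightarrow> c \<le> j \<Longrightarrow> B c i \<Longrightarrow> B c j \<Longrightarrow> B i j"
  shows "psd P M \<Longrightarrow> (\<forall>i<P. \<forall>j<P. M i j \<noteq> 0 \<longrightarrow> B i j) \<Longrightarrow> (\<forall>i<s. \<forall>j<P. M i j = 0) \<Longrightarrow> s \<le> P
    \<Longrightarrow> \<exists>x. (\<forall>i<P. \<forall>j<P. M i j = (\<Sum>c\<in>{s..<P}. x c i * cnj (x c j)))
          \<and> (\<forall>c i. x c i \<noteq> 0 \<longrightarrow> c \<le> i \<and> i < P \<and> B c i)"
proof (induction "P - s" arbitrary: s M)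
  case 0
  then show ?case by (intro exI[of _ "\<lambda>c i. 0"]) auto
next
  case (Suc k)
  then have "s < P" by simp
  obtain y where psd': "psd P (\<lambda>i j. M i j - y i * cnj (y j))"
    and pattern': "\<forall>i<P. \<forall>j<P. M i j - y i * cnj (y j) \<noteq> 0 \<longrightarrow> B i j"
    and upper': "\<forall>i<Suc s. \<forall>j<P. M i j - y i * cnj (y j) = 0"
    and y: "\<And>i. y i \<noteq> 0 \<Longrightarrow> s \<le> i \<and> i < P \<and> B s i"
  proof (rule psd_pivot_step_in_pattern[where B = B, OF _ Suc.prems(1-3) \<open>s < P\<close>])
    show "B i j" if "c \<le> i" "c \<le> j" "B c i" "B c j" for c i j
      using that by (rule elim)
  qed (rule that)
  obtain x where x: "\<forall>i<P. \<forall>j<P. M i j - y i * cnj (y j) = (\<Sum>c\<in>{Suc s..<P}. x c i * cnj (x c j))"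
    and x_supp: "\<forall>c i. x c i \<noteq> 0 \<longrightarrow> c \<le> i \<and> i < P \<and> B c i"
  proof -
    have "k = P - Suc s" "Suc s \<le> P" using Suc.hyps(2) by arith+
    from Suc.hyps(1)[OF this(1) psd' pattern' upper' this(2)] show ?thesis using that by blast
  qed
  define x' where "x' = x(s := y)"
  have "M i j = (\<Sum>c\<in>{s..<P}. x' c i * cnj (x' c j))" if "i < P" "j < P" for i j
  proof -
    have "{s..<P} = insert s {Suc s..<P}" using \<open>s < P\<close> by auto
    then have "(\<Sum>c\<in>{s..<P}. x' c i * cnj (x' c j))
        = y i * cnj (y j) + (\<Sum>c\<in>{Suc s..<P}. x c i * cnj (x c j))"
      by (simp add: x'_def)
    then show ?thesis using x that by (metis add_diff_cancel_left' diff_add_cancel)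
  qed
  moreover have "c \<le> i \<and> i < P \<and> B c i" if "x' c i \<noteq> 0" for c i
    using that x_supp y by (auto simp: x'_def split: if_splits)
  ultimately show ?case by blast
qed

lemma psd_cholesky_in_pattern:
  fixes B :: "nat \<Rightarrow> nat \<Rightarrow> bool"
  assumes elim: "\<And>c i j. c \<le> i \<Longrightarrow> c \<le> j \<Longrightarrow> B c i \<Longrightarrow> B c j \<Longrightarrow> B i j"
    and psd: "psd P M" and pattern: "\<And>i j. i < P \<Longrightarrow> j < P \<Longrightarrow> M i j \<noteq> 0 \<Longrightarrow> B i j"
  obtains x where "\<And>i j. i < P \<Longrightarrow> j < P \<Longrightarrow> M i j = (\<Sum>c<P. x c i * cnj (x c j))"
    and "\<And>c i. x c i \<noteq> 0 \<Longrightarrow> c \<le> i \<and> i < P \<and> B c i"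
proof -
  have "\<exists>x. (\<forall>i<P. \<forall>j<P. M i j = (\<Sum>c\<in>{0..<P}. x c i * cnj (x c j)))
      \<and> (\<forall>c i. x c i \<noteq> 0 \<longrightarrow> c \<le> i \<and> i < P \<and> B c i)"
    by (rule psd_cholesky_in_pattern_from[OF elim psd]) (use pattern in auto)
  then show ?thesis using that by (auto simp: atLeast0LessThan)
qed

section \<open>Block Toeplitz matrices with positive symbol\<close>

definition freqs :: "nat \<Rightarrow> int set" where
  "freqs n = {1 - int n..int n - 1}"

lemma finite_freqs [simp]: "finite (freqs n)"
  by (simp add: freqs_def)

lemma mem_freqs: "m \<in> freqs n \<longleftrightarrow> \<bar>m\<bar> < int n"
  by (auto simp: freqs_def)

lemma uminus_mem_freqs: "m \<in> freqs n \<Longrightarrow> - m \<in> freqs n"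
  by (auto simp: mem_freqs)

lemma sum_lessThan_mult_div_mod:
  fixes N q :: nat
  shows "(\<Sum>i<N*q. f (i div q) (i mod q)) = (\<Sum>k<N. \<Sum>a<q. f k a)"
proof -
  have block: "(\<Sum>i\<in>{k*q..<k*q + q}. f (i div q) (i mod q)) = (\<Sum>a<q. f k a)" for k
    using sum.atLeastLessThan_shift_0[of "\<lambda>i. f (i div q) (i mod q)" "k*q" "k*q + q"]
    by (auto simp: lessThan_atLeast0 intro!: sum.cong)
  have "(\<Sum>i<N*q. f (i div q) (i mod q))
      = (\<Sum>k<N. \<Sum>i\<in>{k*q..<k*q + q}. f (i div q) (i mod q))"
    by (rule sum.nat_group[symmetric])
  then show ?thesis by (simp only: block)
qed

lemma sum2_lessThan_mult_div_mod:
  fixes N q :: nat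
  shows "(\<Sum>i<N*q. \<Sum>j<N*q. F (i div q) (i mod q) (j div q) (j mod q)) =
    (\<Sum>k<N. \<Sum>a<q. \<Sum>l<N. \<Sum>b<q. F k a l b)"
proof -
  have "(\<Sum>j<N*q. F k a (j div q) (j mod q)) = (\<Sum>l<N. \<Sum>b<q. F k a l b)" for k a
    by (rule sum_lessThan_mult_div_mod)
  then have "(\<Sum>i<N*q. \<Sum>j<N*q. F (i div q) (i mod q) (j div q) (j mod q))
      = (\<Sum>i<N*q. (\<lambda>k a. \<Sum>l<N. \<Sum>b<q. F k a l b) (i div q) (i mod q))"
    by (simp only:)
  also have "\<dots> = (\<Sum>k<N. \<Sum>a<q. \<Sum>l<N. \<Sum>b<q. F k a l b)"
    by (rule sum_lessThan_mult_div_mod)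
  finally show ?thesis .
qed

lemma qform_flatten:
  fixes N q :: nat
  shows "qform (N*q) (\<lambda>i j. F (i div q) (i mod q) (j div q) (j mod q)) v =
    (\<Sum>k<N. \<Sum>a<q. \<Sum>l<N. \<Sum>b<q. cnj (v (k*q + a)) * F k a l b * v (l*q + b))"
  unfolding qform_def
  using sum2_lessThan_mult_div_mod[where F = "\<lambda>k a l b. cnj (v (k*q + a)) * F k a l b * v (l*q + b)"
      and N = N and q = q]
  by (simp add: div_mult_mod_eq)

lemma sum_regroup4:
  "(\<Sum>k\<in>K. \<Sum>a\<in>A. \<Sum>l\<in>K. \<Sum>b\<in>A. f k a l b) = (\<Sum>a\<in>A. \<Sum>b\<in>A. \<Sum>k\<in>K. \<Sum>l\<in>K. f k a l b)"
proof -
  have "(\<Sum>k\<in>K. \<Sum>a\<in>A. \<Sum>l\<in>K. \<Sum>b\<in>A. f k a l b) = (\<Sum>k\<in>K. \<Sum>a\<in>A. \<Sum>b\<in>A. \<Sum>l\<in>K. f k a l b)"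
    by (intro sum.cong refl) (rule sum.swap)
  also have "\<dots> = (\<Sum>a\<in>A. \<Sum>k\<in>K. \<Sum>b\<in>A. \<Sum>l\<in>K. f k a l b)"
    by (rule sum.swap)
  also have "\<dots> = (\<Sum>a\<in>A. \<Sum>b\<in>A. \<Sum>k\<in>K. \<Sum>l\<in>K. f k a l b)"
    by (intro sum.cong refl) (rule sum.swap)
  finally show ?thesis .
qed

lemma psd_flatten_block_psd:
  assumes "block_psd q n B"
  shows "psd (n*q) (\<lambda>i j. B (i mod q) (j mod q) (i div q) (j div q))"
  unfolding psd_iff_qform
proof
  fix v :: "nat \<Rightarrow> complex"
  have "qform (n*q) (\<lambda>i j. B (i mod q) (j mod q) (i div q) (j div q)) v
      = (\<Sum>a<q. \<Sum>b<q. \<Sum>k<n. \<Sum>l<n. cnj (v (k*q + a)) * B a b k l * v (l*q + b))"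
    unfolding qform_flatten[where F = "\<lambda>k a l b. B a b k l"] by (rule sum_regroup4)
  then show "cnonneg (qform (n*q) (\<lambda>i j. B (i mod q) (j mod q) (i div q) (j div q)) v)"
    using assms unfolding block_psd_def by (auto dest: spec[of _ "\<lambda>a k. v (k*q + a)"])
qed

lemma sum_cis_roots_of_unity:
  assumes "M > 0"
  shows "(\<Sum>s<M. cis (2 * pi * real s * of_int j / real M)) = (if int M dvd j then of_nat M else 0)"
proof (cases "int M dvd j")
  case True
  then obtain t where t: "j = int M * t" by blast
  have "2 * pi * real s * of_int j / real M = 2 * pi * of_int (int s * t)" for s
    using assms by (simp add: t field_simps)
  then show ?thesis using True by simp
next
  case False
  define r where "r = cis (2 * pi * of_int j / real M)"
  have powers: "cis (2 * pi * real s * of_int j / real M) = r ^ s" for s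
    unfolding r_def Complex.DeMoivre by (simp add: mult_ac)
  have "r \<noteq> 1"
  proof
    assume "r = 1"
    then obtain m :: int where "2 * pi * of_int j / real M = of_int m * 2 * pi"
      by (auto simp: r_def complex_eq_iff cos_one_2pi_int)
    then have "real_of_int j = real M * of_int m" using assms by (simp add: field_simps)
    then have "j = int M * m" by (metis of_int_eq_iff of_int_mult of_int_of_nat_eq)
    then show False using False by simp
  qed
  moreover have "r ^ M = 1"
    using assms unfolding r_def Complex.DeMoivre by simp
  ultimately have "(\<Sum>s<M. r ^ s) = 0" by (simp add: sum_gp_strict)
  then show ?thesis using False powers by simp
qed

lemma trig_poly_sample_coeff:
  fixes c :: "int \<Rightarrow> complex"
  assumes "M > 0" "finite I" and small: "\<And>m. m \<in> I \<Longrightarrow> \<bar>m - j\<bar> < int M"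
  shows "(\<Sum>s<M. (\<Sum>m\<in>I. c m * cis (of_int m * (2 * pi * real s / real M)))
            * cis (- (of_int j * (2 * pi * real s / real M))))
         = of_nat M * (if j \<in> I then c j else 0)"
proof -
  have "cis (of_int m * (2 * pi * real s / real M)) * cis (- (of_int j * (2 * pi * real s / real M)))
      = cis (2 * pi * real s * of_int (m - j) / real M)" for m s
    by (simp add: cis_mult algebra_simps diff_divide_distrib)
  then have "(\<Sum>s<M. (\<Sum>m\<in>I. c m * cis (of_int m * (2 * pi * real s / real M)))
            * cis (- (of_int j * (2 * pi * real s / real M))))
      = (\<Sum>m\<in>I. c m * (\<Sum>s<M. cis (2 * pi * real s * of_int (m - j) / real M)))"
    by (simp add: sum_distrib_left sum_distrib_right mult.assoc sum.swap[of _ "{..<M}"])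
  also have "\<dots> = (\<Sum>m\<in>I. if m = j then of_nat M * c m else 0)"
  proof (intro sum.cong refl)
    fix m assume "m \<in> I"
    then have "int M dvd (m - j) \<longleftrightarrow> m = j"
      using small[OF \<open>m \<in> I\<close>] dvd_imp_le_int[of "m - j" "int M"] by (cases "m = j") auto
    then show "c m * (\<Sum>s<M. cis (2 * pi * real s * of_int (m - j) / real M))
        = (if m = j then of_nat M * c m else 0)"
      unfolding sum_cis_roots_of_unity[OF \<open>M > 0\<close>] by simp
  qed
  also have "\<dots> = of_nat M * (if j \<in> I then c j else 0)"
    using \<open>finite I\<close> by (simp add: sum.delta')
  finally show ?thesis .
qed

lemma qform_modulated_blocks:
  "(\<Sum>k<N. \<Sum>a<q. \<Sum>l<N. \<Sum>b<q. cnj (V k a) * (G a b * cis (- (of_int (int l - int k) * t))) * V l b)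
    = qform q G (\<lambda>b. \<Sum>l<N. cis (- (of_nat l * t)) * V l b)"
proof -
  have "cnj (\<Sum>k<N. cis (- (of_nat k * t)) * V k a) * G a b * (\<Sum>l<N. cis (- (of_nat l * t)) * V l b)
      = (\<Sum>k<N. \<Sum>l<N. cnj (V k a) * (G a b * cis (- (of_int (int l - int k) * t))) * V l b)" for a b
    by (simp add: sum_distrib_left sum_distrib_right cis_cnj algebra_simps)
      (simp add: mult.left_commute[of "cis _"] cis_mult algebra_simps)
  then show ?thesis
    unfolding qform_def by (simp add: sum_regroup4)
qed

lemma psd_block_toeplitz_of_psd_symbol:
  fixes g :: "nat \<Rightarrow> nat \<Rightarrow> int \<Rightarrow> complex"
  assumes symbol: "\<And>t. psd q (\<lambda>a b. \<Sum>m\<in>freqs n. g a b m * cis (of_int m * t))"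
    and supp: "\<And>a b m. m \<notin> freqs n \<Longrightarrow> g a b m = 0"
  shows "psd (N*q) (\<lambda>i j. g (i mod q) (j mod q) (int (j div q) - int (i div q)))"
  unfolding psd_iff_qform
proof
  fix v :: "nat \<Rightarrow> complex"
  define M where "M = N + n + 1"
  define \<theta> where "\<theta> s = 2 * pi * real s / real M" for s
  define G where "G s a b = (\<Sum>m\<in>freqs n. g a b m * cis (of_int m * \<theta> s))" for s a b
  \<comment> \<open>sampling the symbol at the \<open>M\<close>-th roots of unity recovers its coefficients\<close>
  have coeff: "g a b (int l - int k) = (\<Sum>s<M. G s a b * cis (- (of_int (int l - int k) * \<theta> s))) / of_nat M"
    if "k < N" "l < N" for a b k l
  proof -
    have "(\<Sum>s<M. G s a b * cis (- (of_int (int l - int k) * \<theta> s)))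
        = of_nat M * (if int l - int k \<in> freqs n then g a b (int l - int k) else 0)"
      unfolding G_def \<theta>_def
      by (rule trig_poly_sample_coeff) (use that in \<open>auto simp: M_def mem_freqs\<close>)
    moreover have "(of_nat M :: complex) \<noteq> 0" unfolding M_def by (simp only: of_nat_eq_0_iff)
    ultimately show ?thesis using supp[of "int l - int k" a b] by (auto split: if_splits)
  qed
  let ?V = "\<lambda>k a. v (k*q + a)"
  have "qform (N*q) (\<lambda>i j. g (i mod q) (j mod q) (int (j div q) - int (i div q))) v
      = (\<Sum>k<N. \<Sum>a<q. \<Sum>l<N. \<Sum>b<q. cnj (?V k a) * g a b (int l - int k) * ?V l b)"
    by (rule qform_flatten)
  also have "\<dots> = (\<Sum>k<N. \<Sum>a<q. \<Sum>l<N. \<Sum>b<q. \<Sum>s<M.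
      cnj (?V k a) * (G s a b * cis (- (of_int (int l - int k) * \<theta> s))) * ?V l b / of_nat M)"
    by (intro sum.cong refl) (simp add: coeff sum_distrib_left sum_distrib_right sum_divide_distrib)
  also have "\<dots> = (\<Sum>s<M. \<Sum>k<N. \<Sum>a<q. \<Sum>l<N. \<Sum>b<q.
      cnj (?V k a) * (G s a b * cis (- (of_int (int l - int k) * \<theta> s))) * ?V l b) / of_nat M"
    by (simp only: sum_divide_distrib[symmetric] sum.swap[of _ "{..<M}"])
  also have "\<dots> = (\<Sum>s<M. qform q (G s) (\<lambda>b. \<Sum>l<N. cis (- (of_nat l * \<theta> s)) * ?V l b)) / of_nat M"
    by (simp only: qform_modulated_blocks)
  finally show "cnonneg (qform (N*q) (\<lambda>i j. g (i mod q) (j mod q) (int (j div q) - int (i div q))) v)"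
    using symbol unfolding psd_iff_qform G_def by (auto intro!: cnonneg_divide_of_nat cnonneg_sum)
qed

lemma sum_lessThan_window:
  fixes h :: "nat \<Rightarrow> 'a::comm_monoid_add"
  assumes "\<And>i. h i \<noteq> 0 \<Longrightarrow> K \<le> i \<and> i < K + W \<and> i < L"
  shows "(\<Sum>i<L. h i) = (\<Sum>i<W. h (K + i))"
proof -
  have zero: "h i = 0" if "\<not> (K \<le> i \<and> i < K + W \<and> i < L)" for i
    using assms that by blast
  have "(\<Sum>i<L. h i) = (\<Sum>i\<in>{..<L} \<inter> {K..<K + W}. h i)"
    by (rule sum.mono_neutral_right) (auto intro: zero)
  also have "\<dots> = (\<Sum>i\<in>{K..<K + W}. h i)"
    by (rule sum.mono_neutral_left) (auto intro: zero)
  also have "\<dots> = (\<Sum>i<W. h (K + i))"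
    using sum.atLeastLessThan_shift_0[of h K "K + W"] by (simp add: lessThan_atLeast0 comp_def)
  finally show ?thesis .
qed

lemma rank_one_pairing_nonneg:
  fixes R :: "nat \<Rightarrow> nat \<Rightarrow> complex"
  assumes R: "psd (n*q) R" and shift: "\<And>K i j. R (K*q + i) (K*q + j) = R i j"
    and window: "\<And>i. x i \<noteq> 0 \<Longrightarrow> K*q \<le> i \<and> i < K*q + n*q \<and> i < L"
  shows "cnonneg (\<Sum>i<L. \<Sum>j<L. x i * cnj (x j) * R i j)"
proof -
  have "(\<Sum>i<L. \<Sum>j<L. x i * cnj (x j) * R i j)
      = (\<Sum>i<L. \<Sum>j<n*q. x i * cnj (x (K*q + j)) * R i (K*q + j))"
  proof (rule sum.cong[OF refl])
    fix i
    show "(\<Sum>j<L. x i * cnj (x j) * R i j) = (\<Sum>j<n*q. x i * cnj (x (K*q + j)) * R i (K*q + j))"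
      by (rule sum_lessThan_window) (simp add: window)
  qed
  also have "\<dots> = (\<Sum>i<n*q. \<Sum>j<n*q. x (K*q + i) * cnj (x (K*q + j)) * R (K*q + i) (K*q + j))"
  proof (rule sum_lessThan_window)
    fix i assume "(\<Sum>j<n*q. x i * cnj (x (K*q + j)) * R i (K*q + j)) \<noteq> 0"
    then have "x i \<noteq> 0" by (cases "x i = 0") simp_all
    then show "K*q \<le> i \<and> i < K*q + n*q \<and> i < L" by (rule window)
  qed
  also have "\<dots> = qform (n*q) R (\<lambda>i. cnj (x (K*q + i)))"
    unfolding qform_def shift by (simp add: mult_ac)
  finally show ?thesis using R by (simp add: psd_iff_qform)
qed

text \<open>A positive matrix whose entries vanish outside a band of width \<open>n\<close> blocks is a sum of
  rank-one positive matrices each living on \<open>n\<close> consecutive blocks; there the block-shift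
  invariant \<open>R\<close> looks like its positive \<open>n\<close>-block section.\<close>

lemma banded_psd_pairing_nonneg:
  fixes Q R :: "nat \<Rightarrow> nat \<Rightarrow> complex"
  assumes "q > 0" and Q: "psd L Q"
    and band: "\<And>i j. i < L \<Longrightarrow> j < L \<Longrightarrow> Q i j \<noteq> 0 \<Longrightarrow> \<bar>int (i div q) - int (j div q)\<bar> < int n"
    and R: "psd (n*q) R" and shift: "\<And>K i j. R (K*q + i) (K*q + j) = R i j"
  shows "cnonneg (\<Sum>i<L. \<Sum>j<L. Q i j * R i j)"
proof -
  define B where "B i j \<longleftrightarrow> \<bar>int (i div q) - int (j div q)\<bar> < int n" for i j
  have elim: "B i j" if "c \<le> i" "c \<le> j" "B c i" "B c j" for c i j
    using that div_le_mono[OF that(1), of q] div_le_mono[OF that(2), of q] by (auto simp: B_def)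
  obtain x where Q_eq: "\<And>i j. i < L \<Longrightarrow> j < L \<Longrightarrow> Q i j = (\<Sum>c<L. x c i * cnj (x c j))"
    and x_supp: "\<And>c i. x c i \<noteq> 0 \<Longrightarrow> c \<le> i \<and> i < L \<and> B c i"
  proof (rule psd_cholesky_in_pattern[where B = B, OF _ Q])
    show "B i j" if "c \<le> i" "c \<le> j" "B c i" "B c j" for c i j
      using that by (rule elim)
    show "B i j" if "i < L" "j < L" "Q i j \<noteq> 0" for i j
      using band[OF that] by (simp add: B_def)
  qed (rule that)
  have "(\<Sum>i<L. \<Sum>j<L. Q i j * R i j) = (\<Sum>i<L. \<Sum>j<L. \<Sum>c<L. x c i * cnj (x c j) * R i j)"
    by (intro sum.cong refl) (simp add: Q_eq sum_distrib_right)
  also have "\<dots> = (\<Sum>i<L. \<Sum>c<L. \<Sum>j<L. x c i * cnj (x c j) * R i j)"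
    by (rule sum.cong[OF refl]) (rule sum.swap)
  also have "\<dots> = (\<Sum>c<L. \<Sum>i<L. \<Sum>j<L. x c i * cnj (x c j) * R i j)"
    by (rule sum.swap)
  finally have "(\<Sum>i<L. \<Sum>j<L. Q i j * R i j) = (\<Sum>c<L. \<Sum>i<L. \<Sum>j<L. x c i * cnj (x c j) * R i j)" .
  moreover have "cnonneg (\<Sum>i<L. \<Sum>j<L. x c i * cnj (x c j) * R i j)" for c
  proof (rule rank_one_pairing_nonneg[OF R shift])
    fix i assume "x c i \<noteq> 0"
    then have "c \<le> i" "i < L" "B c i" using x_supp by auto
    then have "c div q \<le> i div q" "i div q < c div q + n"
      unfolding B_def using div_le_mono[of c i q] by auto
    have "c div q * q \<le> i div q * q" using \<open>c div q \<le> i div q\<close> by simp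
    also have "\<dots> \<le> i" by (rule div_times_less_eq_dividend)
    finally show "c div q * q \<le> i \<and> i < c div q * q + n * q \<and> i < L"
      using \<open>i < L\<close> \<open>i div q < c div q + n\<close> div_less_iff_less_mult[OF \<open>q > 0\<close>]
      by (simp add: algebra_simps)
  qed
  ultimately show ?thesis by (simp add: cnonneg_sum)
qed

lemma cnonneg_of_linear_growth:
  assumes "\<And>j::nat. cnonneg (a + of_nat j * b)"
  shows "cnonneg b"
proof -
  have "Im a = 0" using assms[of 0] by (simp add: cnonneg_def)
  then have "Im b = 0" using assms[of 1] by (simp add: cnonneg_def)
  moreover have "Re b \<ge> 0"
  proof (rule ccontr)
    assume "\<not> Re b \<ge> 0"
    moreover obtain j :: nat where "Re a / - Re b < real j" using reals_Archimedean2 by blast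
    ultimately have "Re a + real j * Re b < 0" by (simp add: field_simps)
    then show False using assms[of j] by (simp add: cnonneg_def)
  qed
  ultimately show ?thesis by (simp add: cnonneg_def)
qed

lemma sum_toeplitz_square_Suc:
  fixes \<phi> :: "int \<Rightarrow> complex"
  assumes supp: "\<And>m. \<phi> m \<noteq> 0 \<Longrightarrow> m \<in> freqs n" and "n \<le> N"
  shows "(\<Sum>k<Suc N. \<Sum>l<Suc N. \<phi> (int l - int k))
    = (\<Sum>k<N. \<Sum>l<N. \<phi> (int l - int k)) + (\<Sum>m\<in>freqs n. \<phi> m)"
proof -
  have "(\<Sum>k<Suc N. \<Sum>l<Suc N. \<phi> (int l - int k))
      = (\<Sum>k<N. \<Sum>l<N. \<phi> (int l - int k))
        + ((\<Sum>k<N. \<phi> (int N - int k)) + (\<Sum>l<Suc N. \<phi> (int l - int N)))"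
    by (simp add: sum.distrib)
  moreover have "(\<Sum>k<N. \<phi> (int N - int k)) = (\<Sum>m\<in>{1..int N}. \<phi> m)"
    by (rule sum.reindex_bij_witness[where i = "\<lambda>m. nat (int N - m)" and j = "\<lambda>k. int N - int k"]) auto
  moreover have "(\<Sum>l<Suc N. \<phi> (int l - int N)) = (\<Sum>m\<in>{- int N..0}. \<phi> m)"
    by (rule sum.reindex_bij_witness[where i = "\<lambda>m. nat (m + int N)" and j = "\<lambda>l. int l - int N"]) auto
  moreover have "(\<Sum>m\<in>{1..int N}. \<phi> m) + (\<Sum>m\<in>{- int N..0}. \<phi> m) = (\<Sum>m\<in>{- int N..int N}. \<phi> m)"
    by (subst sum.union_disjoint[symmetric]) (auto intro: sum.cong)
  moreover have "(\<Sum>m\<in>{- int N..int N}. \<phi> m) = (\<Sum>m\<in>freqs n. \<phi> m)"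
  proof (rule sum.mono_neutral_right)
    show "\<forall>m\<in>{- int N..int N} - freqs n. \<phi> m = 0" using supp by blast
  qed (use \<open>n \<le> N\<close> in \<open>auto simp: freqs_def\<close>)
  ultimately show ?thesis by simp
qed

lemma block_toeplitz_pairing_nonneg:
  fixes g \<rho> :: "nat \<Rightarrow> nat \<Rightarrow> int \<Rightarrow> complex"
  assumes "q > 0"
    and symbol: "\<And>t. psd q (\<lambda>a b. \<Sum>m\<in>freqs n. g a b m * cis (of_int m * t))"
    and supp: "\<And>a b m. m \<notin> freqs n \<Longrightarrow> g a b m = 0"
    and toeplitz: "block_psd q n (\<lambda>a b k l. \<rho> a b (int k - int l))"
  shows "cnonneg (\<Sum>k<N. \<Sum>l<N. \<Sum>a<q. \<Sum>b<q. g a b (int l - int k) * \<rho> a b (int k - int l))"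
proof -
  let ?Q = "\<lambda>i j. g (i mod q) (j mod q) (int (j div q) - int (i div q))"
  let ?R = "\<lambda>i j. \<rho> (i mod q) (j mod q) (int (i div q) - int (j div q))"
  have "cnonneg (\<Sum>i<N*q. \<Sum>j<N*q. ?Q i j * ?R i j)"
  proof (rule banded_psd_pairing_nonneg)
    show "psd (N*q) ?Q" using symbol supp by (rule psd_block_toeplitz_of_psd_symbol)
    show "\<bar>int (i div q) - int (j div q)\<bar> < int n" if "?Q i j \<noteq> 0" for i j
    proof -
      have "int (j div q) - int (i div q) \<in> freqs n" using that supp by blast
      then show ?thesis by (simp add: mem_freqs abs_minus_commute)
    qed
    show "psd (n*q) ?R" using psd_flatten_block_psd[OF toeplitz] by simp
    show "?R (K*q + i) (K*q + j) = ?R i j" for K i j using \<open>q > 0\<close> by simp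
  qed (rule \<open>q > 0\<close>)
  also have "(\<Sum>i<N*q. \<Sum>j<N*q. ?Q i j * ?R i j)
      = (\<Sum>k<N. \<Sum>a<q. \<Sum>l<N. \<Sum>b<q. g a b (int l - int k) * \<rho> a b (int k - int l))"
    by (rule sum2_lessThan_mult_div_mod)
  also have "\<dots> = (\<Sum>k<N. \<Sum>l<N. \<Sum>a<q. \<Sum>b<q. g a b (int l - int k) * \<rho> a b (int k - int l))"
    by (rule sum.cong[OF refl]) (rule sum.swap)
  finally show ?thesis .
qed

text \<open>The pairing of the previous lemma grows like \<open>N\<close> times the claimed sum, by the band
  structure of the symbol.\<close>

lemma symbol_pairing_nonneg:
  fixes g \<rho> :: "nat \<Rightarrow> nat \<Rightarrow> int \<Rightarrow> complex"
  assumes symbol: "\<And>t. psd q (\<lambda>a b. \<Sum>m\<in>freqs n. g a b m * cis (of_int m * t))"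
    and supp: "\<And>a b m. m \<notin> freqs n \<Longrightarrow> g a b m = 0"
    and toeplitz: "block_psd q n (\<lambda>a b k l. \<rho> a b (int k - int l))"
  shows "cnonneg (\<Sum>a<q. \<Sum>b<q. \<Sum>m\<in>freqs n. g a b m * \<rho> a b (- m))"
proof (cases "q = 0")
  case False
  define \<phi> where "\<phi> m = (\<Sum>a<q. \<Sum>b<q. g a b m * \<rho> a b (- m))" for m
  define A where "A N = (\<Sum>k<N. \<Sum>l<N. \<phi> (int l - int k))" for N
  have A_nonneg: "cnonneg (A N)" for N
    using block_toeplitz_pairing_nonneg[OF _ symbol supp toeplitz, of N] False
    by (simp add: A_def \<phi>_def)
  have A_growth: "A (n + j) = A n + of_nat j * (\<Sum>m\<in>freqs n. \<phi> m)" for j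
  proof (induction j)
    case (Suc j)
    have "\<phi> m \<noteq> 0 \<Longrightarrow> m \<in> freqs n" for m
      using supp by (force simp: \<phi>_def)
    then have "A (Suc (n + j)) = A (n + j) + (\<Sum>m\<in>freqs n. \<phi> m)"
      unfolding A_def by (intro sum_toeplitz_square_Suc) auto
    then show ?case using Suc by (simp add: algebra_simps)
  qed simp
  have "cnonneg (\<Sum>m\<in>freqs n. \<phi> m)"
    by (rule cnonneg_of_linear_growth[of "A n"]) (metis A_growth A_nonneg)
  also have "(\<Sum>m\<in>freqs n. \<phi> m) = (\<Sum>a<q. \<Sum>m\<in>freqs n. \<Sum>b<q. g a b m * \<rho> a b (- m))"
    unfolding \<phi>_def by (rule sum.swap)
  also have "\<dots> = (\<Sum>a<q. \<Sum>b<q. \<Sum>m\<in>freqs n. g a b m * \<rho> a b (- m))"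
    by (rule sum.cong[OF refl]) (rule sum.swap)
  finally show ?thesis .
qed (simp add: cnonneg_def)

section \<open>Fourier analysis on the circle\<close>

lemma sphere_eq_cis:
  assumes "z \<in> sphere (0::complex) 1"
  obtains t where "t \<in> {0..2*pi}" "z = cis t"
proof
  have "norm z = 1" using assms by simp
  then show "z = cis (Arg2pi z)" by (simp add: complex_norm_eq_1_exp cis_conv_exp)
  show "Arg2pi z \<in> {0..2*pi}" using Arg2pi[of z] by auto
qed

lemma continuous_on_compose_cis:
  "continuous_on (sphere 0 1) f \<Longrightarrow> continuous_on {0..2*pi} (\<lambda>t. f (cis t))"
  by (rule continuous_on_compose2[of _ f _ cis]) (auto intro: continuous_intros)

lemma fourier_integrand_integrable:
  "continuous_on (sphere 0 1) f \<Longrightarrow> (\<lambda>t. f (cis t) * cis (- (of_int k * t))) integrable_on {0..2*pi}"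
  by (intro integrable_continuous_real continuous_intros continuous_on_compose_cis)

lemma has_integral_cis_int:
  "((\<lambda>t. cis (of_int j * t)) has_integral (if j = 0 then of_real (2*pi) else 0)) {0..2*pi}"
proof (cases "j = 0")
  case True
  then show ?thesis using has_integral_const_real[of "1::complex" 0 "2*pi"] by (simp add: scaleR_conv_of_real)
next
  case False
  have exp: "cis (of_int j * t) = exp ((\<i> * of_int j) * complex_of_real t)" for t
    by (simp add: cis_conv_exp mult_ac)
  have "integral {0..2*pi} (\<lambda>t. exp ((\<i> * of_int j) * complex_of_real t))
      = (exp ((\<i> * of_int j) * of_real (2*pi)) - 1) / (\<i> * of_int j)"
    by (rule integral_exp) (use False in auto)
  also have "exp ((\<i> * of_int j) * of_real (2*pi)) = cis (2 * pi * of_int j)"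
    by (simp add: cis_conv_exp mult_ac)
  finally have "integral {0..2*pi} (\<lambda>t. cis (of_int j * t)) = 0"
    by (simp add: exp)
  moreover have "(\<lambda>t. cis (of_int j * t)) integrable_on {0..2*pi}"
    by (intro integrable_continuous_real continuous_intros)
  ultimately show ?thesis using False by (simp add: has_integral_integrable_integral)
qed

lemma fourier_coeff_add:
  assumes "continuous_on (sphere 0 1) f" "continuous_on (sphere 0 1) g"
  shows "fourier_coeff (\<lambda>z. f z + g z) k = fourier_coeff f k + fourier_coeff g k"
  unfolding fourier_coeff_def distrib_right
  by (simp add: integral_add fourier_integrand_integrable assms add_divide_distrib)

lemma fourier_coeff_scale:
  "fourier_coeff (\<lambda>z. c * f z) k = c * fourier_coeff f k"
  unfolding fourier_coeff_def mult.assoc by (simp add: integral_mult_right)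

lemma fourier_coeff_diff:
  assumes "continuous_on (sphere 0 1) f" "continuous_on (sphere 0 1) g"
  shows "fourier_coeff (\<lambda>z. f z - g z) k = fourier_coeff f k - fourier_coeff g k"
  using fourier_coeff_add[OF assms(1) continuous_on_mult_left[OF assms(2), of "-1"], of k]
    fourier_coeff_scale[of "-1" g k]
  by simp

definition trig_poly :: "(int \<Rightarrow> complex) \<Rightarrow> nat \<Rightarrow> complex \<Rightarrow> complex" where
  "trig_poly c n z = (if z \<in> sphere 0 1 then (\<Sum>m\<in>freqs n. c m * z powi m) else 0)"

lemma trig_poly_cis: "trig_poly c n (cis t) = (\<Sum>m\<in>freqs n. c m * cis (of_int m * t))"
  by (simp add: trig_poly_def cis_power_int)

lemma continuous_on_trig_poly: "continuous_on (sphere 0 1) (trig_poly c n)"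
proof -
  have "continuous_on (sphere 0 1) (\<lambda>z::complex. \<Sum>m\<in>freqs n. c m * z powi m)"
    by (intro continuous_intros) auto
  then show ?thesis by (rule continuous_on_cong[THEN iffD1, rotated 2]) (auto simp: trig_poly_def)
qed

lemma fourier_coeff_trig_poly: "fourier_coeff (trig_poly c n) k = (if k \<in> freqs n then c k else 0)"
proof -
  have "trig_poly c n (cis t) * cis (- (of_int k * t)) = (\<Sum>m\<in>freqs n. c m * cis (of_int (m - k) * t))" for t
    unfolding trig_poly_cis sum_distrib_right
    by (intro sum.cong refl) (simp add: mult.assoc cis_mult algebra_simps)
  moreover have "((\<lambda>t. \<Sum>m\<in>freqs n. c m * cis (of_int (m - k) * t)) has_integral
      (\<Sum>m\<in>freqs n. c m * (if m - k = 0 then of_real (2*pi) else 0))) {0..2*pi}"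
    by (intro has_integral_sum finite_freqs has_integral_mult_right has_integral_cis_int)
  moreover have "(\<Sum>m\<in>freqs n. c m * (if m - k = 0 then of_real (2*pi) else 0))
      = (if k \<in> freqs n then c k * of_real (2*pi) else 0)"
    by (simp add: if_distrib sum.delta cong: if_cong)
  ultimately show ?thesis
    unfolding fourier_coeff_def by (simp add: integral_unique)
qed

lemma trig_poly_mem_CS1_low: "trig_poly c n \<in> CS1_low n"
  using continuous_on_trig_poly by (auto simp: CS1_low_def fourier_coeff_trig_poly mem_freqs trig_poly_def)

definition laurent_eval :: "(complex \<times> int) list \<Rightarrow> complex \<Rightarrow> complex" where
  "laurent_eval xs z = (\<Sum>(c, k)\<leftarrow>xs. c * z powi k)"

lemma laurent_eval_Nil [simp]: "laurent_eval [] z = 0"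
  by (simp add: laurent_eval_def)

lemma laurent_eval_Cons [simp]: "laurent_eval ((c, k) # xs) z = c * z powi k + laurent_eval xs z"
  by (simp add: laurent_eval_def)

lemma laurent_eval_append: "laurent_eval (xs @ ys) z = laurent_eval xs z + laurent_eval ys z"
  by (simp add: laurent_eval_def)

lemma laurent_eval_scale: "laurent_eval (map (\<lambda>(c, k). (a * c, k)) xs) z = a * laurent_eval xs z"
  by (induction xs) (auto simp: algebra_simps)

lemma laurent_eval_mult:
  assumes "z \<noteq> 0"
  shows "laurent_eval [(c * d, k + l). (c, k) \<leftarrow> xs, (d, l) \<leftarrow> ys] z = laurent_eval xs z * laurent_eval ys z"
proof -
  have "laurent_eval (map (\<lambda>(d, l). (c * d, k + l)) ys) z = c * z powi k * laurent_eval ys z" for c k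
    by (induction ys) (auto simp: algebra_simps power_int_add assms)
  then show ?thesis
    by (induction xs) (auto simp: laurent_eval_append distrib_right)
qed

lemma continuous_on_laurent_eval: "continuous_on (sphere 0 1) (laurent_eval xs)"
proof (induction xs)
  case (Cons x xs)
  obtain c k where "x = (c, k)" by force
  moreover have "continuous_on (sphere 0 1) (\<lambda>z::complex. c * z powi k + laurent_eval xs z)"
    by (intro continuous_intros Cons.IH) auto
  ultimately show ?case by simp
qed (simp add: laurent_eval_def)

definition laurent_real :: "(complex \<Rightarrow> real) \<Rightarrow> bool" where
  "laurent_real h \<longleftrightarrow> (\<exists>xs. \<forall>z\<in>sphere 0 1. complex_of_real (h z) = laurent_eval xs z)"

lemma continuous_on_laurent_real:
  assumes "laurent_real h"
  shows "continuous_on (sphere 0 1) h"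
proof -
  obtain xs where "\<forall>z\<in>sphere 0 1. complex_of_real (h z) = laurent_eval xs z"
    using assms laurent_real_def by blast
  then have "Re (laurent_eval xs z) = h z" if "z \<in> sphere 0 1" for z
    using that by (metis Re_complex_of_real)
  moreover have "continuous_on (sphere 0 1) (\<lambda>z. Re (laurent_eval xs z))"
    by (intro continuous_intros continuous_on_laurent_eval)
  ultimately show ?thesis by (metis continuous_on_eq)
qed

lemma laurent_real_add_mult:
  assumes "laurent_real h" "laurent_real h'"
  shows "laurent_real (\<lambda>z. h z + h' z)" and "laurent_real (\<lambda>z. h z * h' z)"
proof -
  obtain xs ys where xs: "\<forall>z\<in>sphere 0 1. complex_of_real (h z) = laurent_eval xs z"
    and ys: "\<forall>z\<in>sphere 0 1. complex_of_real (h' z) = laurent_eval ys z"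
    using assms unfolding laurent_real_def by blast
  show "laurent_real (\<lambda>z. h z + h' z)"
    unfolding laurent_real_def by (rule exI[of _ "xs @ ys"]) (simp add: laurent_eval_append xs ys)
  show "laurent_real (\<lambda>z. h z * h' z)"
    unfolding laurent_real_def
  proof (rule exI[of _ "[(c * d, k + l). (c, k) \<leftarrow> xs, (d, l) \<leftarrow> ys]"], intro ballI)
    fix z :: complex assume "z \<in> sphere 0 1"
    moreover have "z \<noteq> 0" using \<open>z \<in> sphere 0 1\<close> by auto
    ultimately show "complex_of_real (h z * h' z) = laurent_eval [(c * d, k + l). (c, k) \<leftarrow> xs, (d, l) \<leftarrow> ys] z"
      using xs ys by (simp add: laurent_eval_mult)
  qed
qed

lemma laurent_real_Re_Im: "laurent_real Re" "laurent_real Im"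
proof -
  have inverse_cnj: "inverse z = cnj z" if "z \<in> sphere 0 1" for z
    using that by (intro inverse_unique) (simp add: complex_norm_square[symmetric])
  show "laurent_real Re"
    unfolding laurent_real_def
    by (intro exI[of _ "[(1/2, 1), (1/2, -1)]"]) (simp add: power_int_minus inverse_cnj complex_eq_iff)
  show "laurent_real Im"
    unfolding laurent_real_def
    by (intro exI[of _ "[(- \<i>/2, 1), (\<i>/2, -1)]"]) (simp add: power_int_minus inverse_cnj complex_eq_iff)
qed

lemma laurent_real_dense:
  assumes "continuous_on (sphere 0 1) u" "e > 0"
  shows "\<exists>h. laurent_real h \<and> (\<forall>z\<in>sphere 0 1. \<bar>u z - h z\<bar> < e)"
proof (rule Stone_Weierstrass_HOL[where P = laurent_real])
  show "laurent_real (\<lambda>z. c)" for c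
    unfolding laurent_real_def by (intro exI[of _ "[(of_real c, 0)]"]) simp
  show "\<exists>h. laurent_real h \<and> h x \<noteq> h y" if "x \<in> sphere 0 1 \<and> y \<in> sphere 0 1 \<and> x \<noteq> y" for x y
    using that laurent_real_Re_Im by (cases "Re x = Re y") (auto simp: complex_eq_iff)
qed (use assms continuous_on_laurent_real laurent_real_add_mult in auto)

lemma laurent_dense:
  assumes f: "continuous_on (sphere 0 1) f" and "e > 0"
  obtains xs where "\<And>z. z \<in> sphere 0 1 \<Longrightarrow> norm (f z - laurent_eval xs z) < e"
proof -
  obtain hu hv where hu: "laurent_real hu" "\<forall>z\<in>sphere 0 1. \<bar>Re (f z) - hu z\<bar> < e / 2"
    and hv: "laurent_real hv" "\<forall>z\<in>sphere 0 1. \<bar>Im (f z) - hv z\<bar> < e / 2"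
    using laurent_real_dense[OF continuous_on_Re[OF f]] laurent_real_dense[OF continuous_on_Im[OF f]]
      \<open>e > 0\<close> by (meson half_gt_zero)
  obtain xu xv where xu: "\<forall>z\<in>sphere 0 1. complex_of_real (hu z) = laurent_eval xu z"
    and xv: "\<forall>z\<in>sphere 0 1. complex_of_real (hv z) = laurent_eval xv z"
    using hu(1) hv(1) unfolding laurent_real_def by blast
  show ?thesis
  proof (rule that[of "xu @ map (\<lambda>(c, k). (\<i> * c, k)) xv"])
    fix z :: complex assume z: "z \<in> sphere 0 1"
    have "f z - laurent_eval (xu @ map (\<lambda>(c, k). (\<i> * c, k)) xv) z
        = of_real (Re (f z) - hu z) + \<i> * of_real (Im (f z) - hv z)"
      using xu xv z by (simp add: laurent_eval_append laurent_eval_scale complex_eq_iff)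
    also have "norm \<dots> \<le> \<bar>Re (f z) - hu z\<bar> + \<bar>Im (f z) - hv z\<bar>"
      by (rule norm_triangle_le) (simp add: norm_mult flip: of_real_diff)
    also have "\<dots> < e" using hu(2) hv(2) z by fastforce
    finally show "norm (f z - laurent_eval (xu @ map (\<lambda>(c, k). (\<i> * c, k)) xv) z) < e" .
  qed
qed

lemma fourier_coeffs_zero_imp_orthogonal:
  assumes g: "continuous_on (sphere 0 1) g" and zero: "\<And>k. fourier_coeff g k = 0"
  shows "((\<lambda>t. g (cis t) * laurent_eval xs (cis t)) has_integral 0) {0..2*pi}"
proof (induction xs)
  case (Cons x xs)
  obtain c k where x: "x = (c, k)" by force
  have "((\<lambda>t. g (cis t) * cis (- (of_int (- k) * t))) has_integral 0) {0..2*pi}"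
    using zero[of "- k"] fourier_integrand_integrable[OF g, of "- k"]
    by (simp add: fourier_coeff_def has_integral_integrable_integral)
  then have "((\<lambda>t. c * (g (cis t) * cis (of_int k * t)) + g (cis t) * laurent_eval xs (cis t))
      has_integral (c * 0 + 0)) {0..2*pi}"
    by (intro has_integral_add has_integral_mult_right Cons.IH) simp
  then show ?case by (simp add: x cis_power_int algebra_simps)
qed simp

lemma continuous_integral_cnj_mult_self_eq_0:
  fixes u :: "real \<Rightarrow> complex"
  assumes u: "continuous_on {a..b} u" and "a < b"
    and zero: "integral {a..b} (\<lambda>t. u t * cnj (u t)) = 0" and "t \<in> {a..b}"
  shows "u t = 0"
proof -
  have cont: "continuous_on {a..b} (\<lambda>t. (cmod (u t))\<^sup>2)"
    by (intro continuous_intros u)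
  have "((\<lambda>t. complex_of_real ((cmod (u t))\<^sup>2)) has_integral
      of_real (integral {a..b} (\<lambda>t. (cmod (u t))\<^sup>2))) {a..b}"
    by (intro has_integral_of_real integrable_integral integrable_continuous_real cont)
  then have "((\<lambda>t. u t * cnj (u t)) has_integral of_real (integral {a..b} (\<lambda>t. (cmod (u t))\<^sup>2))) {a..b}"
    unfolding complex_norm_square .
  then have "integral {a..b} (\<lambda>t. (cmod (u t))\<^sup>2) = 0"
    using zero by (simp add: integral_unique)
  then show ?thesis
    using integral_eq_0_iff[OF cont \<open>a < b\<close>] \<open>t \<in> {a..b}\<close> by simp
qed

text \<open>With \<open>u t = g (cis t)\<close>: \<open>\<integral> u \<cdot> cnj u = \<integral> u \<cdot> (cnj u - p)\<close> for every Laurent polynomial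
  \<open>p\<close>, and \<open>p\<close> may approximate \<open>cnj u\<close> uniformly.\<close>

lemma fourier_coeffs_zero_norm_integral_le:
  assumes g: "continuous_on (sphere 0 1) g" and zero: "\<And>k. fourier_coeff g k = 0"
    and B: "\<And>z. z \<in> sphere 0 1 \<Longrightarrow> norm (g z) \<le> B" and "e > 0"
  shows "norm (integral {0..2*pi} (\<lambda>t. g (cis t) * cnj (g (cis t)))) \<le> B * e * (2 * pi)"
proof -
  define u where "u t = g (cis t)" for t
  have u: "continuous_on {0..2*pi} u"
    unfolding u_def by (rule continuous_on_compose_cis[OF g])
  obtain xs where xs: "\<And>z. z \<in> sphere 0 1 \<Longrightarrow> norm (cnj (g z) - laurent_eval xs z) < e"
    using laurent_dense[OF continuous_on_cnj[OF g] \<open>e > 0\<close>] by blast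
  have orth: "((\<lambda>t. u t * laurent_eval xs (cis t)) has_integral 0) {0..2*pi}"
    unfolding u_def by (rule fourier_coeffs_zero_imp_orthogonal[OF g zero])
  have "(\<lambda>t. u t * cnj (u t)) integrable_on {0..2*pi}"
    by (intro integrable_continuous_real continuous_intros u)
  then have "integral {0..2*pi} (\<lambda>t. u t * (cnj (u t) - laurent_eval xs (cis t)))
      = integral {0..2*pi} (\<lambda>t. u t * cnj (u t)) - integral {0..2*pi} (\<lambda>t. u t * laurent_eval xs (cis t))"
    unfolding right_diff_distrib by (rule integral_diff[OF _ has_integral_integrable[OF orth]])
  then have "integral {0..2*pi} (\<lambda>t. u t * cnj (u t))
      = integral {0..2*pi} (\<lambda>t. u t * (cnj (u t) - laurent_eval xs (cis t)))"
    using integral_unique[OF orth] by simp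
  also have "norm \<dots> \<le> (B * e) * (2 * pi - 0)"
  proof (rule integral_bound)
    show "continuous_on {0..2*pi} (\<lambda>t. u t * (cnj (u t) - laurent_eval xs (cis t)))"
      using continuous_on_compose_cis[OF continuous_on_laurent_eval]
      by (intro continuous_intros u) auto
    have "0 \<le> norm (g 1)" "norm (g 1) \<le> B" using B[of 1] by simp_all
    then have "0 \<le> B" by linarith
    then show "norm (u t * (cnj (u t) - laurent_eval xs (cis t))) \<le> B * e" for t
      unfolding norm_mult u_def using B[of "cis t"] xs[of "cis t"]
      by (intro mult_mono) (simp_all add: less_imp_le)
  qed simp
  finally show ?thesis by (simp add: u_def)
qed

lemma fourier_coeffs_zero_imp_zero:
  assumes g: "continuous_on (sphere 0 1) g" and zero: "\<And>k. fourier_coeff g k = 0"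
    and z: "z \<in> sphere 0 1"
  shows "g z = 0"
proof -
  obtain B where B: "B > 0" "\<And>z. z \<in> sphere 0 1 \<Longrightarrow> norm (g z) \<le> B"
  proof -
    have "bounded (g ` sphere 0 1)" by (intro compact_imp_bounded compact_continuous_image g) simp
    then show ?thesis using that unfolding bounded_pos by blast
  qed
  let ?I = "integral {0..2*pi} (\<lambda>t. g (cis t) * cnj (g (cis t)))"
  have "norm ?I \<le> 0"
  proof (rule field_le_epsilon)
    fix e :: real assume "e > 0"
    then show "norm ?I \<le> 0 + e"
      using fourier_coeffs_zero_norm_integral_le[OF g zero B(2), of "e / (2 * pi * B)"] B(1)
      by (simp add: field_simps)
  qed
  then have "?I = 0" by simp
  moreover obtain t where "t \<in> {0..2*pi}" "z = cis t" using sphere_eq_cis[OF z] .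
  moreover have "0 < 2 * pi" by simp
  ultimately show ?thesis
    using continuous_integral_cnj_mult_self_eq_0[OF continuous_on_compose_cis[OF g]] by blast
qed

lemma CS1_low_eq_trig_poly:
  assumes f: "f \<in> CS1_low n"
  shows "f = trig_poly (fourier_coeff f) n"
proof
  fix z
  have cont: "continuous_on (sphere 0 1) f" and off: "z \<notin> sphere 0 1 \<Longrightarrow> f z = 0"
    and high: "\<And>k. \<bar>k\<bar> \<ge> int n \<Longrightarrow> fourier_coeff f k = 0"
    using f by (auto simp: CS1_low_def)
  show "f z = trig_poly (fourier_coeff f) n z"
  proof (cases "z \<in> sphere 0 1")
    case True
    have "fourier_coeff (\<lambda>z. f z - trig_poly (fourier_coeff f) n z) k = 0" for k
      unfolding fourier_coeff_diff[OF cont continuous_on_trig_poly] fourier_coeff_trig_poly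
      using high by (auto simp: mem_freqs)
    moreover have "continuous_on (sphere 0 1) (\<lambda>z. f z - trig_poly (fourier_coeff f) n z)"
      by (intro continuous_on_diff cont continuous_on_trig_poly)
    ultimately have "f z - trig_poly (fourier_coeff f) n z = 0"
      using fourier_coeffs_zero_imp_zero True by blast
    then show ?thesis by simp
  qed (simp add: off trig_poly_def)
qed

lemma CS1_low_cis:
  "f \<in> CS1_low n \<Longrightarrow> f (cis t) = (\<Sum>m\<in>freqs n. fourier_coeff f m * cis (of_int m * t))"
  by (subst CS1_low_eq_trig_poly) (simp_all add: trig_poly_cis)

section \<open>The duality map\<close>

definition toeplitz_entry :: "(nat \<Rightarrow> nat \<Rightarrow> complex) \<Rightarrow> int \<Rightarrow> complex" where
  "toeplitz_entry T m = (if 0 \<le> m then T (nat m) 0 else T 0 (nat (- m)))"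

definition toeplitz_basis :: "nat \<Rightarrow> int \<Rightarrow> nat \<Rightarrow> nat \<Rightarrow> complex" where
  "toeplitz_basis n j = (\<lambda>k l. if k < n \<and> l < n \<and> int k - int l = j then 1 else 0)"

lemma toeplitz_entry_eq:
  assumes "T \<in> toeplitz n"
  shows "T k l = (if k < n \<and> l < n then toeplitz_entry T (int k - int l) else 0)"
proof -
  obtain \<tau> where "\<And>k l. T k l = (if k < n \<and> l < n then \<tau> (int k - int l) else 0)"
    using assms unfolding toeplitz_def by blast
  then show ?thesis by (auto simp: toeplitz_entry_def)
qed

lemma toeplitz_add:
  assumes "x \<in> toeplitz n" "y \<in> toeplitz n"
  shows "(\<lambda>k l. x k l + y k l) \<in> toeplitz n"
proof -
  obtain \<tau> \<sigma> where "\<forall>k l. x k l = (if k < n \<and> l < n then \<tau> (int k - int l) else 0)"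
    and "\<forall>k l. y k l = (if k < n \<and> l < n then \<sigma> (int k - int l) else 0)"
    using assms unfolding toeplitz_def by blast
  then show ?thesis unfolding toeplitz_def by (intro CollectI exI[of _ "\<lambda>m. \<tau> m + \<sigma> m"]) simp
qed

lemma toeplitz_scale:
  assumes "x \<in> toeplitz n"
  shows "(\<lambda>k l. c * x k l) \<in> toeplitz n"
proof -
  obtain \<tau> where "\<forall>k l. x k l = (if k < n \<and> l < n then \<tau> (int k - int l) else 0)"
    using assms unfolding toeplitz_def by blast
  then show ?thesis unfolding toeplitz_def by (intro CollectI exI[of _ "\<lambda>m. c * \<tau> m"]) simp
qed

lemma toeplitz_zero: "(\<lambda>k l. 0) \<in> toeplitz n"
  unfolding toeplitz_def by (intro CollectI exI[of _ "\<lambda>m. 0"]) simp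

lemma toeplitz_basis_mem: "toeplitz_basis n j \<in> toeplitz n"
  unfolding toeplitz_def toeplitz_basis_def by (intro CollectI exI[of _ "\<lambda>m. if m = j then 1 else 0"]) auto

lemma toeplitz_entry_add: "toeplitz_entry (\<lambda>k l. x k l + y k l) m = toeplitz_entry x m + toeplitz_entry y m"
  by (simp add: toeplitz_entry_def)

lemma toeplitz_entry_scale: "toeplitz_entry (\<lambda>k l. c * x k l) m = c * toeplitz_entry x m"
  by (simp add: toeplitz_entry_def)

lemma toeplitz_entry_basis: "m \<in> freqs n \<Longrightarrow> toeplitz_entry (toeplitz_basis n j) m = (if m = j then 1 else 0)"
  by (auto simp: toeplitz_entry_def toeplitz_basis_def mem_freqs)

lemma toeplitz_eq_sum_basis:
  assumes "T \<in> toeplitz n"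
  shows "T = (\<lambda>k l. \<Sum>j\<in>freqs n. toeplitz_entry T j * toeplitz_basis n j k l)"
proof (intro ext)
  fix k l
  show "T k l = (\<Sum>j\<in>freqs n. toeplitz_entry T j * toeplitz_basis n j k l)"
  proof (cases "k < n \<and> l < n")
    case True
    then have "int k - int l \<in> freqs n" by (auto simp: mem_freqs)
    then show ?thesis using True toeplitz_entry_eq[OF assms, of k l]
      by (simp add: toeplitz_basis_def if_distrib sum.delta' cong: if_cong)
  next
    case False
    then have "toeplitz_basis n j k l = 0" for j by (auto simp: toeplitz_basis_def)
    then show ?thesis using toeplitz_entry_eq[OF assms, of k l] False by simp
  qed
qed

lemma toeplitz_dual_sum:
  assumes \<phi>: "\<phi> \<in> toeplitz_dual n" and "finite J" and X: "\<And>j. j \<in> J \<Longrightarrow> X j \<in> toeplitz n"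
  shows "(\<lambda>k l. \<Sum>j\<in>J. c j * X j k l) \<in> toeplitz n
    \<and> \<phi> (\<lambda>k l. \<Sum>j\<in>J. c j * X j k l) = (\<Sum>j\<in>J. c j * \<phi> (X j))"
  using \<open>finite J\<close> X
proof (induction J rule: finite_induct)
  case empty
  have "\<forall>c. \<forall>x\<in>toeplitz n. \<phi> (\<lambda>k l. c * x k l) = c * \<phi> x"
    using \<phi> by (simp add: toeplitz_dual_def)
  from this[rule_format, OF toeplitz_zero, of 0] show ?case using toeplitz_zero by simp
next
  case (insert x J)
  then have "X x \<in> toeplitz n" "(\<lambda>k l. \<Sum>j\<in>J. c j * X j k l) \<in> toeplitz n" by auto
  moreover note toeplitz_scale[OF this(1), of "c x"]
  ultimately show ?case
    using insert \<phi> toeplitz_add unfolding toeplitz_dual_def by simp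
qed

definition fourier_functional :: "nat \<Rightarrow> (complex \<Rightarrow> complex) \<Rightarrow> (nat \<Rightarrow> nat \<Rightarrow> complex) \<Rightarrow> complex" where
  "fourier_functional n f T =
    (if T \<in> toeplitz n then \<Sum>m\<in>freqs n. fourier_coeff f m * toeplitz_entry T (- m) else 0)"

lemma fourier_functional_mem_dual: "fourier_functional n f \<in> toeplitz_dual n"
  unfolding toeplitz_dual_def
proof (intro CollectI conjI ballI allI impI)
  fix x y assume "x \<in> toeplitz n" "y \<in> toeplitz n"
  then show "fourier_functional n f (\<lambda>k l. x k l + y k l) = fourier_functional n f x + fourier_functional n f y"
    using toeplitz_add
    by (simp add: fourier_functional_def toeplitz_entry_add distrib_left sum.distrib)
next
  fix c x assume "x \<in> toeplitz n"
  then show "fourier_functional n f (\<lambda>k l. c * x k l) = c * fourier_functional n f x"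
    using toeplitz_scale
    by (simp add: fourier_functional_def toeplitz_entry_scale sum_distrib_left mult_ac)
qed (simp add: fourier_functional_def)

lemma fourier_functional_basis:
  assumes "m \<in> freqs n"
  shows "fourier_functional n f (toeplitz_basis n (- m)) = fourier_coeff f m"
proof -
  have "fourier_functional n f (toeplitz_basis n (- m))
      = (\<Sum>m'\<in>freqs n. fourier_coeff f m' * toeplitz_entry (toeplitz_basis n (- m)) (- m'))"
    by (simp add: fourier_functional_def toeplitz_basis_mem)
  also have "\<dots> = (\<Sum>m'\<in>freqs n. if m' = m then fourier_coeff f m' else 0)"
    by (intro sum.cong refl) (auto simp: toeplitz_entry_basis uminus_mem_freqs)
  also have "\<dots> = fourier_coeff f m" using assms by simp
  finally show ?thesis .
qed

lemma inj_on_fourier_functional: "inj_on (fourier_functional n) (CS1_low n)"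
proof (rule inj_onI)
  fix f g assume f: "f \<in> CS1_low n" and g: "g \<in> CS1_low n"
    and eq: "fourier_functional n f = fourier_functional n g"
  have "fourier_coeff f m = fourier_coeff g m" if "m \<in> freqs n" for m
    using fourier_functional_basis[OF that] eq by metis
  then have "trig_poly (fourier_coeff f) n = trig_poly (fourier_coeff g) n"
    unfolding trig_poly_def by (intro ext) (auto intro!: sum.cong)
  then show "f = g" using CS1_low_eq_trig_poly[OF f] CS1_low_eq_trig_poly[OF g] by simp
qed

lemma fourier_functional_image: "fourier_functional n ` CS1_low n = toeplitz_dual n"
proof
  show "fourier_functional n ` CS1_low n \<subseteq> toeplitz_dual n"
    using fourier_functional_mem_dual by blast
next
  show "toeplitz_dual n \<subseteq> fourier_functional n ` CS1_low n"
  proof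
    fix \<phi> assume \<phi>: "\<phi> \<in> toeplitz_dual n"
    define c where "c m = \<phi> (toeplitz_basis n (- m))" for m
    have "fourier_functional n (trig_poly c n) T = \<phi> T" for T
    proof (cases "T \<in> toeplitz n")
      case True
      have "fourier_functional n (trig_poly c n) T = (\<Sum>m\<in>freqs n. c m * toeplitz_entry T (- m))"
        using True by (simp add: fourier_functional_def fourier_coeff_trig_poly)
      also have "\<dots> = (\<Sum>j\<in>freqs n. toeplitz_entry T j * \<phi> (toeplitz_basis n j))"
        by (rule sum.reindex_bij_witness[where i = uminus and j = uminus])
          (auto simp: uminus_mem_freqs c_def)
      also have "\<dots> = \<phi> T"
        using toeplitz_dual_sum[where X = "toeplitz_basis n" and c = "toeplitz_entry T",
            OF \<phi> finite_freqs toeplitz_basis_mem]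
          arg_cong[of _ _ \<phi>, OF toeplitz_eq_sum_basis[OF True]]
        by simp
      finally show ?thesis .
    qed (use \<phi> in \<open>simp add: fourier_functional_def toeplitz_dual_def\<close>)
    then have "\<phi> = fourier_functional n (trig_poly c n)" by (intro ext) simp
    then show "\<phi> \<in> fourier_functional n ` CS1_low n"
      using trig_poly_mem_CS1_low by blast
  qed
qed

lemma fourier_functional_add:
  assumes "f \<in> CS1_low n" "g \<in> CS1_low n"
  shows "fourier_functional n (\<lambda>z. f z + g z) = (\<lambda>T. fourier_functional n f T + fourier_functional n g T)"
  using fourier_coeff_add assms
  by (intro ext) (simp add: fourier_functional_def CS1_low_def distrib_right sum.distrib)

lemma fourier_functional_scale:
  "fourier_functional n (\<lambda>z. c * f z) = (\<lambda>T. c * fourier_functional n f T)"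
  by (intro ext) (simp add: fourier_functional_def fourier_coeff_scale sum_distrib_left mult_ac)

lemma fourier_functional_unit:
  assumes "n \<ge> 1"
  shows "fourier_functional n CS1_unit = toeplitz_dual_unit n"
proof
  fix T
  have zero: "0 \<in> freqs n" using assms by (simp add: mem_freqs)
  have "(\<Sum>m\<in>freqs n. (if m = 0 then 1 else 0) * z powi m) = 1" for z :: complex
  proof -
    have "(\<Sum>m\<in>freqs n. (if m = 0 then 1 else 0) * z powi m) = (\<Sum>m\<in>freqs n. if m = 0 then 1 else 0)"
      by (intro sum.cong) auto
    then show ?thesis using zero by simp
  qed
  then have unit: "CS1_unit = trig_poly (\<lambda>m. if m = 0 then 1 else 0) n"
    by (intro ext) (simp add: CS1_unit_def trig_poly_def)
  have "fourier_coeff CS1_unit m = (if m = 0 then 1 else 0)" if "m \<in> freqs n" for m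
    using that unfolding unit by (simp add: fourier_coeff_trig_poly)
  then have "(\<Sum>m\<in>freqs n. fourier_coeff CS1_unit m * toeplitz_entry T (- m))
      = (\<Sum>m\<in>freqs n. if m = 0 then toeplitz_entry T 0 else 0)"
    by (intro sum.cong refl) simp
  also have "\<dots> = toeplitz_entry T 0" using zero by simp
  finally show "fourier_functional n CS1_unit T = toeplitz_dual_unit n T"
    by (simp add: fourier_functional_def toeplitz_dual_unit_def toeplitz_entry_def)
qed



lemma block_psd_one: "block_psd (Suc 0) p (\<lambda>a b. M) \<longleftrightarrow> psd p M"
proof
  assume "block_psd (Suc 0) p (\<lambda>a b. M)"
  then show "psd p M"
    unfolding block_psd_def psd_def by (auto dest: spec[of _ "\<lambda>a. _"])
next
  assume "psd p M"
  then show "block_psd (Suc 0) p (\<lambda>a b. M)"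
    unfolding block_psd_def psd_def by simp
qed

definition cis_toeplitz :: "nat \<Rightarrow> real \<Rightarrow> nat \<Rightarrow> nat \<Rightarrow> complex" where
  "cis_toeplitz n t = (\<lambda>k l. if k < n \<and> l < n then cis (- (of_int (int k - int l) * t)) else 0)"

lemma cis_toeplitz_mem: "cis_toeplitz n t \<in> toeplitz n"
  unfolding toeplitz_def cis_toeplitz_def by (intro CollectI exI[of _ "\<lambda>m. cis (- (of_int m * t))"]) simp

lemma psd_cis_toeplitz: "psd n (cis_toeplitz n t)"
  unfolding psd_iff_qform
proof
  fix v :: "nat \<Rightarrow> complex"
  have "qform n (cis_toeplitz n t) v
      = (\<Sum>k<n. \<Sum>l<n. cnj (cis (of_nat k * t) * v k) * (cis (of_nat l * t) * v l))"
    unfolding qform_def cis_toeplitz_def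
    by (intro sum.cong refl) (simp add: cis_cnj cis_mult algebra_simps)
  also have "\<dots> = cnj (\<Sum>k<n. cis (of_nat k * t) * v k) * (\<Sum>l<n. cis (of_nat l * t) * v l)"
    by (simp add: sum_product)
  finally show "cnonneg (qform n (cis_toeplitz n t) v)"
    by (simp only: cnonneg_cnj_mult_self)
qed

lemma fourier_functional_cis_toeplitz:
  assumes "f \<in> CS1_low n"
  shows "fourier_functional n f (cis_toeplitz n t) = f (cis t)"
proof -
  have "toeplitz_entry (cis_toeplitz n t) (- m) = cis (of_int m * t)" if "m \<in> freqs n" for m
    using that by (auto simp: toeplitz_entry_def cis_toeplitz_def mem_freqs)
  then show ?thesis
    using cis_toeplitz_mem CS1_low_cis[OF assms] by (simp add: fourier_functional_def)
qed

lemma CS1_low_pos_of_toeplitz_dual_pos: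
  assumes F: "\<forall>i<p. \<forall>j<p. F i j \<in> CS1_low n"
    and pos: "toeplitz_dual_pos n p (\<lambda>i j. fourier_functional n (F i j))"
  shows "CS1_low_pos p F"
  unfolding CS1_low_pos_def
proof
  fix z :: complex assume "z \<in> sphere 0 1"
  then obtain t where z: "z = cis t" by (rule sphere_eq_cis)
  have "block_psd (Suc 0) n (\<lambda>a b. cis_toeplitz n t)"
    using psd_cis_toeplitz by (simp add: block_psd_one)
  with cis_toeplitz_mem
  have "block_psd (Suc 0) p (\<lambda>a b i j. fourier_functional n (F i j) (cis_toeplitz n t))"
    by (intro pos[unfolded toeplitz_dual_pos_def toeplitz_pos_def, rule_format]) simp_all
  then have "psd p (\<lambda>i j. fourier_functional n (F i j) (cis_toeplitz n t))"
    by (simp add: block_psd_one)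
  then show "psd p (\<lambda>i j. F i j z)"
    by (rule psd_cong) (simp add: F z fourier_functional_cis_toeplitz)
qed

lemma psd_compressed_fourier_symbol:
  assumes F: "\<forall>i<p. \<forall>j<p. F i j \<in> CS1_low n" and pos: "CS1_low_pos p F"
  shows "psd q (\<lambda>a b. \<Sum>m\<in>freqs n.
    (\<Sum>i<p. \<Sum>j<p. cnj (v a i) * fourier_coeff (F i j) m * v b j) * cis (of_int m * t))"
proof -
  have "psd q (\<lambda>a b. \<Sum>i<p. \<Sum>j<p. cnj (v a i) * F i j (cis t) * v b j)"
    using pos by (intro psd_compress) (simp add: CS1_low_pos_def)
  moreover have "(\<Sum>i<p. \<Sum>j<p. cnj (v a i) * F i j (cis t) * v b j)
      = (\<Sum>i<p. \<Sum>j<p. cnj (v a i) * (\<Sum>m\<in>freqs n. fourier_coeff (F i j) m * cis (of_int m * t)) * v b j)"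
    for a b using F by (intro sum.cong refl) (simp add: CS1_low_cis)
  ultimately show ?thesis
    by (simp add: sum_distrib_left sum_distrib_right sum.swap[of _ "freqs n"] mult_ac)
qed

lemma block_psd_toeplitz_entries:
  assumes R: "\<forall>a<q. \<forall>b<q. R a b \<in> toeplitz n" and R_pos: "toeplitz_pos n q R"
  shows "block_psd q n (\<lambda>a b k l. toeplitz_entry (R a b) (int k - int l))"
proof -
  have "R a b k l = toeplitz_entry (R a b) (int k - int l)" if "a < q" "b < q" "k < n" "l < n" for a b k l
    using toeplitz_entry_eq[of "R a b" n k l] R that by simp
  then have "(\<Sum>a<q. \<Sum>b<q. \<Sum>k<n. \<Sum>l<n. cnj (u a k) * toeplitz_entry (R a b) (int k - int l) * u b l)
      = (\<Sum>a<q. \<Sum>b<q. \<Sum>k<n. \<Sum>l<n. cnj (u a k) * R a b k l * u b l)" for u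
    by (intro sum.cong refl) simp
  then show ?thesis
    using R_pos unfolding toeplitz_pos_def block_psd_def by simp
qed

lemma toeplitz_dual_pos_of_CS1_low_pos:
  assumes F: "\<forall>i<p. \<forall>j<p. F i j \<in> CS1_low n" and pos: "CS1_low_pos p F"
  shows "toeplitz_dual_pos n p (\<lambda>i j. fourier_functional n (F i j))"
  unfolding toeplitz_dual_pos_def
proof (intro allI impI)
  fix q R assume R: "\<forall>a<q. \<forall>b<q. R a b \<in> toeplitz n" and R_pos: "toeplitz_pos n q R"
  show "block_psd q p (\<lambda>a b i j. fourier_functional n (F i j) (R a b))"
    unfolding block_psd_def
  proof
    fix v :: "nat \<Rightarrow> nat \<Rightarrow> complex"
    define g where "g a b m = (\<Sum>i<p. \<Sum>j<p. cnj (v a i) * fourier_coeff (F i j) m * v b j)" for a b m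
    have "cnonneg (\<Sum>a<q. \<Sum>b<q. \<Sum>m\<in>freqs n. g a b m * toeplitz_entry (R a b) (- m))"
    proof (rule symbol_pairing_nonneg)
      show "psd q (\<lambda>a b. \<Sum>m\<in>freqs n. g a b m * cis (of_int m * t))" for t
        unfolding g_def by (rule psd_compressed_fourier_symbol[OF F pos])
      show "g a b m = 0" if "m \<notin> freqs n" for a b m
        using that F by (simp add: g_def CS1_low_def mem_freqs)
    qed (rule block_psd_toeplitz_entries[OF R R_pos])
    also have "(\<Sum>a<q. \<Sum>b<q. \<Sum>m\<in>freqs n. g a b m * toeplitz_entry (R a b) (- m))
        = (\<Sum>a<q. \<Sum>b<q. \<Sum>i<p. \<Sum>j<p. cnj (v a i) * fourier_functional n (F i j) (R a b) * v b j)"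
      using R by (simp add: g_def fourier_functional_def sum_distrib_left sum_distrib_right
          sum.swap[of _ "freqs n"] mult_ac)
    finally show "cnonneg (\<Sum>a<q. \<Sum>b<q. \<Sum>i<p. \<Sum>j<p.
        cnj (v a i) * fourier_functional n (F i j) (R a b) * v b j)" .
  qed
qed

theorem corollary3p2:
  fixes n :: nat
  assumes "n \<ge> 1"
  shows "\<exists>\<Phi> :: (complex \<Rightarrow> complex) \<Rightarrow> ((nat \<Rightarrow> nat \<Rightarrow> complex) \<Rightarrow> complex).
    bij_betw \<Phi> (CS1_low n) (toeplitz_dual n)
    \<and> (\<forall>f\<in>CS1_low n. \<forall>g\<in>CS1_low n. \<Phi> (\<lambda>z. f z + g z) = (\<lambda>x. \<Phi> f x + \<Phi> g x))
    \<and> (\<forall>c. \<forall>f\<in>CS1_low n. \<Phi> (\<lambda>z. c * f z) = (\<lambda>x. c * \<Phi> f x))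
    \<and> \<Phi> CS1_unit = toeplitz_dual_unit n
    \<and> (\<forall>p F. (\<forall>i<p. \<forall>j<p. F i j \<in> CS1_low n) \<longrightarrow>
          (CS1_low_pos p F \<longleftrightarrow> toeplitz_dual_pos n p (\<lambda>i j. \<Phi> (F i j))))"
proof (intro exI[of _ "fourier_functional n"] conjI ballI allI impI)
  show "bij_betw (fourier_functional n) (CS1_low n) (toeplitz_dual n)"
    using inj_on_fourier_functional fourier_functional_image by (simp add: bij_betw_def)
  show "fourier_functional n (\<lambda>z. f z + g z) = (\<lambda>x. fourier_functional n f x + fourier_functional n g x)"
    if "f \<in> CS1_low n" "g \<in> CS1_low n" for f g
    using that by (rule fourier_functional_add)
  show "fourier_functional n (\<lambda>z. c * f z) = (\<lambda>x. c * fourier_functional n f x)" for c f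
    by (rule fourier_functional_scale)
  show "fourier_functional n CS1_unit = toeplitz_dual_unit n"
    using assms by (rule fourier_functional_unit)
  show "CS1_low_pos p F \<longleftrightarrow> toeplitz_dual_pos n p (\<lambda>i j. fourier_functional n (F i j))"
    if "\<forall>i<p. \<forall>j<p. F i j \<in> CS1_low n" for p F
    using CS1_low_pos_of_toeplitz_dual_pos[OF that] toeplitz_dual_pos_of_CS1_low_pos[OF that] by blast
qed

end
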